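(* For every $\lambda>\lambda^*$, $G(e(\lambda))>0$ and $e(\lambda)<0$.
   Context: Standing setup. Let $\gamma>0$; let $a_1,\dots,a_p>0$ with weights $\omega_i>0$, $\sum_i\omega_i=1$, and $b_1,\dots,b_n>0$ with weights $\pi_j>0$, $\sum_j\pi_j=1$. Let $\mu$ be the limiting spectral distribution of $\mathbf{N}\mathbf{N}^T$ where $\mathbf{N}=\mathbf{A}^{1/2}\mathbf{G}\mathbf{B}^{1/2}$ is $k\times l$, $\mathbf{G}$ has iid mean-zero entries of variance $1/l$, $k/l\to\gamma$, and the spectral distributions of $\mathbf{A},\mathbf{B}$ converge to $\nu=\sum_i\omega_i\delta_{a_i}$ and $\underline{\nu}=\sum_j\pi_j\delta_{b_j}$. $\mu$ is a compactly supported probability measure on $[0,\infty)$; $\lambda^*>0$ is the right endpoint of its support, and $s(\lambda)=\int\frac{d\mu(t)}{t-\lambda}$ for $\lambda>\lambda^*$. Define $G(e)=\sum_{j=1}^n\frac{b_j\pi_j}{1+\gamma b_j e}$. It is known (master equations) that there is a continuous (indeed smooth) real function $e(\lambda)$ on $(\lambda^*,\infty)$, never equal to a pole $-1/(\gamma b_j)$ of $G$ and with $a_iG(e(\lambda))\ne\lambda$, satisfying $s(\lambda)=\sum_{i=1}^p\frac{\omega_i}{a_iG(e(\lambda))-\lambda}$ and $e(\lambda)=\sum_{i=1}^p\frac{a_i\omega_i}{a_iG(e(\lambda))-\lambda}$. *)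

theory Defs
  imports "HOL-Probability.Probability"
begin

definition measure_support :: "real measure \<Rightarrow> real set" where
  "measure_support M = {x. \<forall>r>0. emeasure M (ball x r) > 0}"

definition stieltjes :: "real measure \<Rightarrow> real \<Rightarrow> real" where
  "stieltjes M l = (\<integral>t. 1 / (t - l) \<partial>M)"

definition Gfun :: "real \<Rightarrow> nat \<Rightarrow> (nat \<Rightarrow> real) \<Rightarrow> (nat \<Rightarrow> real) \<Rightarrow> real \<Rightarrow> real" where
  "Gfun \<gamma> n b \<pi> e = (\<Sum>j=1..n. b j * \<pi> j / (1 + \<gamma> * b j * e))"

end

theory Submission
  imports Defs
begin

text \<open>Since \<open>\<mu>\<close> lives on \<open>[0, \<lambda>\<^sup>*]\<close> and is not concentrated at \<open>0\<close>, the Stieltjes transform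
  satisfies \<open>s(\<lambda>) < -1/\<lambda>\<close> for \<open>\<lambda> > \<lambda>\<^sup>*\<close>. If \<open>G(e(\<lambda>)) \<le> 0\<close>, every term of the first master
  equation is at least \<open>-\<omega>\<^sub>i/\<lambda>\<close>, giving \<open>s(\<lambda>) \<ge> -1/\<lambda>\<close>; hence \<open>G(e(\<lambda>)) > 0\<close>. Combining the
  two master equations yields \<open>G(e(\<lambda>)) e(\<lambda>) = 1 + \<lambda> s(\<lambda>) < 0\<close>, so \<open>e(\<lambda>) < 0\<close>.\<close>

lemma AE_in_measure_support:
  fixes M :: "real measure"
  assumes "sets M = sets borel"
  shows "AE t in M. t \<in> measure_support M"
proof -
  define F where "F = {ball x r | x r. r > 0 \<and> emeasure M (ball x r) = 0}"
  have "\<And>S. S \<in> F \<Longrightarrow> open S" unfolding F_def by auto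
  then obtain F' where F': "F' \<subseteq> F" "countable F'" "\<Union>F' = \<Union>F"
    using Lindelof by metis
  have null: "(\<Union>S\<in>F'. S) \<in> null_sets M"
  proof (rule null_sets_UN'[OF F'(2)])
    fix S assume "S \<in> F'"
    with F'(1) obtain x r where "S = ball x r" "emeasure M (ball x r) = 0"
      unfolding F_def by auto
    moreover have "S \<in> sets M" using assms \<open>S = ball x r\<close> by simp
    ultimately show "S \<in> null_sets M" by auto
  qed
  have "{t \<in> space M. t \<notin> measure_support M} \<subseteq> \<Union>F"
  proof
    fix t assume "t \<in> {t \<in> space M. t \<notin> measure_support M}"
    then obtain r where "r > 0" "emeasure M (ball t r) = 0"
      unfolding measure_support_def by (auto simp: not_less)
    then show "t \<in> \<Union>F"
      unfolding F_def by (intro UnionI[of "ball t r"]) auto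
  qed
  then show ?thesis
    using F'(3) by (intro AE_I'[OF null]) simp
qed

lemma measure_support_nonempty:
  fixes M :: "real measure"
  assumes "prob_space M" "sets M = sets borel"
  shows "measure_support M \<noteq> {}"
  using AE_in_measure_support[OF assms(2)] prob_space.AE_False[OF assms(1)] by auto

lemma measure_support_AE_ball:
  fixes M :: "real measure"
  assumes "sets M = sets borel" "x \<in> measure_support M" "AE t in M. P t" "r > 0"
  shows "\<exists>t\<in>ball x r. P t"
proof (rule ccontr)
  assume none: "\<not> (\<exists>t\<in>ball x r. P t)"
  from assms(3) obtain N where N: "{t \<in> space M. \<not> P t} \<subseteq> N" "emeasure M N = 0" "N \<in> sets M"
    by (rule AE_E)
  have "space M = UNIV"
    using sets_eq_imp_space_eq[OF assms(1)] by simp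
  with none N(1) have "ball x r \<subseteq> N" by auto
  then have "emeasure M (ball x r) = 0"
    using emeasure_mono[OF _ N(3)] N(2) by (metis le_zero_eq)
  with assms(2,4) show False
    unfolding measure_support_def by auto
qed

text \<open>The integrand \<open>-1/\<lambda> - 1/(t-\<lambda>) = t / (\<lambda>(\<lambda>-t))\<close> is nonnegative on \<open>[0, \<lambda>\<^sup>*]\<close> and vanishes
  only at \<open>t = 0\<close>, while the support point \<open>\<lambda>\<^sup>* > 0\<close> keeps \<open>\<mu>\<close> from being concentrated at \<open>0\<close>.\<close>

lemma stieltjes_less_neg_inverse:
  fixes \<mu> :: "real measure" and l :: real
  assumes "prob_space \<mu>" and borel: "sets \<mu> = sets borel"
    and "compact (measure_support \<mu>)" and nonneg: "measure_support \<mu> \<subseteq> {0..}"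
    and lstar_pos: "Sup (measure_support \<mu>) > 0" and l: "l > Sup (measure_support \<mu>)"
  shows "stieltjes \<mu> l < - 1 / l"
proof -
  interpret prob_space \<mu> by fact
  define S where "S = measure_support \<mu>"
  define lstar where "lstar = Sup S"
  define f where "f t = - 1 / l - 1 / (t - l)" for t
  have l_pos: "l > 0" using l lstar_pos by simp
  have bdd: "bdd_above S"
    using \<open>compact _\<close> unfolding S_def by (simp add: bounded_imp_bdd_above compact_imp_bounded)
  have lstar_in: "lstar \<in> S"
    unfolding lstar_def S_def using assms(1-3)
    by (intro closed_contains_Sup measure_support_nonempty compact_imp_closed bdd[unfolded S_def])
  have range: "AE t in \<mu>. 0 \<le> t \<and> t \<le> lstar"
    using AE_in_measure_support[OF borel] nonneg cSup_upper[OF _ bdd]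
    unfolding lstar_def S_def by auto
  have f_nonneg: "AE t in \<mu>. 0 \<le> f t"
    using range by eventually_elim (use l in \<open>auto simp: f_def lstar_def S_def field_simps\<close>)
  have f_int: "integrable \<mu> f"
  proof (rule integrable_const_bound)
    show "AE t in \<mu>. norm (f t) \<le> 1 / (l - lstar)"
      using range f_nonneg
    proof eventually_elim
      case (elim t)
      have "l - lstar > 0" using l unfolding lstar_def S_def by simp
      then have "1 / (l - t) \<le> 1 / (l - lstar)"
        using elim by (intro divide_left_mono) auto
      moreover have "f t = - 1 / l + 1 / (l - t)"
        unfolding f_def by (metis minus_diff_eq minus_divide_right diff_minus_eq_add)
      moreover have "1 / l > 0" using l_pos by simp
      moreover have "norm (f t) = f t" using elim by simp
      ultimately show ?case by linarith
    qed
    show "f \<in> borel_measurable \<mu>"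
      unfolding f_def measurable_cong_sets[OF borel refl] by measurable
  qed
  have "integral\<^sup>L \<mu> f \<noteq> 0"
  proof
    assume "integral\<^sup>L \<mu> f = 0"
    then have "AE t in \<mu>. f t = 0"
      using integral_nonneg_eq_0_iff_AE[OF f_int f_nonneg] by simp
    with range have "AE t in \<mu>. t = 0"
      by eventually_elim (use l in \<open>auto simp: f_def lstar_def S_def field_simps\<close>)
    then obtain t where "t \<in> ball lstar lstar" "t = 0"
      using measure_support_AE_ball[OF borel lstar_in[unfolded S_def]] lstar_pos
      unfolding lstar_def S_def by blast
    then show False by simp
  qed
  then have "integral\<^sup>L \<mu> f > 0"
    using integral_nonneg_AE[OF f_nonneg] by simp
  moreover have "integral\<^sup>L \<mu> f = - 1 / l - stieltjes \<mu> l"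
  proof -
    have "integrable \<mu> (\<lambda>t. 1 / (t - l))"
      using Bochner_Integration.integrable_diff[OF integrable_const f_int, of "- 1 / l"]
      unfolding f_def by simp
    then show ?thesis
      unfolding f_def stieltjes_def by (simp add: prob_space)
  qed
  ultimately show ?thesis by simp
qed

lemma resolvent_sum_ge_neg_inverse:
  fixes g l :: real and a \<omega> :: "'i \<Rightarrow> real"
  assumes "g \<le> 0" "l > 0" "\<forall>i\<in>I. a i \<ge> 0 \<and> \<omega> i \<ge> 0" "(\<Sum>i\<in>I. \<omega> i) = 1"
  shows "(\<Sum>i\<in>I. \<omega> i / (a i * g - l)) \<ge> - 1 / l"
proof -
  have "- 1 / l = (\<Sum>i\<in>I. \<omega> i) * (1 / - l)"
    using assms(4) by simp
  also have "\<dots> = (\<Sum>i\<in>I. \<omega> i * (1 / - l))"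
    by (rule sum_distrib_right)
  also have "\<dots> \<le> (\<Sum>i\<in>I. \<omega> i * (1 / (a i * g - l)))"
  proof (rule sum_mono, rule mult_left_mono)
    fix i assume "i \<in> I"
    with assms(1,3) have "a i * g \<le> 0" by (simp add: mult_nonneg_nonpos)
    with assms(2) show "1 / - l \<le> 1 / (a i * g - l)"
      by (intro le_imp_inverse_le_neg[unfolded inverse_eq_divide]) auto
  qed (use assms(3) in auto)
  finally show ?thesis by simp
qed

lemma master_equations_product:
  fixes g l :: real and a \<omega> :: "'i \<Rightarrow> real"
  assumes "\<forall>i\<in>I. a i * g \<noteq> l" "(\<Sum>i\<in>I. \<omega> i) = 1"
  shows "g * (\<Sum>i\<in>I. a i * \<omega> i / (a i * g - l)) = 1 + l * (\<Sum>i\<in>I. \<omega> i / (a i * g - l))"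
proof -
  have "g * (\<Sum>i\<in>I. a i * \<omega> i / (a i * g - l)) = (\<Sum>i\<in>I. \<omega> i + l * (\<omega> i / (a i * g - l)))"
    unfolding sum_distrib_left
    by (rule sum.cong) (use assms(1) in \<open>auto simp: field_simps\<close>)
  also have "\<dots> = 1 + l * (\<Sum>i\<in>I. \<omega> i / (a i * g - l))"
    using assms(2) by (simp add: sum.distrib sum_distrib_left)
  finally show ?thesis .
qed

theorem corollary3p5:
  fixes \<gamma> :: real and p n :: nat
    and a \<omega> b \<pi> :: "nat \<Rightarrow> real"
    and \<mu> :: "real measure" and lstar :: real and e :: "real \<Rightarrow> real"
  assumes gamma_pos: "\<gamma> > 0"
    and a_pos: "\<forall>i\<in>{1..p}. a i > 0" and omega_pos: "\<forall>i\<in>{1..p}. \<omega> i > 0"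
    and omega_sum: "(\<Sum>i=1..p. \<omega> i) = 1"
    and b_pos: "\<forall>j\<in>{1..n}. b j > 0" and pi_pos: "\<forall>j\<in>{1..n}. \<pi> j > 0"
    and pi_sum: "(\<Sum>j=1..n. \<pi> j) = 1"
    and mu_prob: "prob_space \<mu>" and mu_borel: "sets \<mu> = sets borel"
    and mu_compact: "compact (measure_support \<mu>)"
    and mu_nonneg: "measure_support \<mu> \<subseteq> {0..}"
    and lstar_def: "lstar = Sup (measure_support \<mu>)"
    and lstar_pos: "lstar > 0"
    and e_cont: "continuous_on {lstar<..} e"
    and e_nonpole: "\<forall>l>lstar. \<forall>j\<in>{1..n}. e l \<noteq> - 1 / (\<gamma> * b j)"
    and e_nonsing: "\<forall>l>lstar. \<forall>i\<in>{1..p}. a i * Gfun \<gamma> n b \<pi> (e l) \<noteq> l"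
    and master_s: "\<forall>l>lstar. stieltjes \<mu> l
        = (\<Sum>i=1..p. \<omega> i / (a i * Gfun \<gamma> n b \<pi> (e l) - l))"
    and master_e: "\<forall>l>lstar. e l
        = (\<Sum>i=1..p. a i * \<omega> i / (a i * Gfun \<gamma> n b \<pi> (e l) - l))"
  shows "\<forall>l>lstar. Gfun \<gamma> n b \<pi> (e l) > 0 \<and> e l < 0"
proof (intro allI impI)
  fix l assume l: "l > lstar"
  define g where "g = Gfun \<gamma> n b \<pi> (e l)"
  have l_pos: "l > 0" using l lstar_pos by simp
  have s_less: "stieltjes \<mu> l < - 1 / l"
    using stieltjes_less_neg_inverse[OF mu_prob mu_borel mu_compact mu_nonneg] lstar_pos l
    unfolding lstar_def by blast
  have g_pos: "g > 0"
  proof (rule ccontr)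
    assume "\<not> g > 0"
    then have "stieltjes \<mu> l \<ge> - 1 / l"
      using resolvent_sum_ge_neg_inverse[of g l "{1..p}" a \<omega>] master_s l l_pos a_pos omega_pos
        omega_sum unfolding g_def by (simp add: less_imp_le)
    with s_less show False by simp
  qed
  have "g * e l = 1 + l * stieltjes \<mu> l"
    using master_equations_product[of "{1..p}" a g l \<omega>] master_s master_e e_nonsing l omega_sum
    unfolding g_def by simp
  also have "\<dots> < 0"
    using s_less l_pos by (simp add: field_simps)
  finally have "e l < 0"
    using g_pos by (simp add: mult_less_0_iff)
  with g_pos show "g > 0 \<and> e l < 0" by simp
qed

end
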